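(* $\textsc{DiffBest}(\mathsf{T}\mathsf{S}\mathsf{T},\mathsf{S}\mathsf{T}\mathsf{S}\mathsf{T},n)=\Theta(n)$ and $\textsc{DiffBest}(\mathsf{S}\mathsf{T}\mathsf{S}\mathsf{T},\mathsf{T}\mathsf{S}\mathsf{T},n)=\Theta(n)$, where for sequences $X,Y$, $\textsc{DiffBest}(X,Y,n)=\max\{|\mathrm{Best}_{\succ_X}(r)\setminus\mathrm{Best}_{\succ_Y}(r)|\}$, the maximum taken over all initial preference formulas and all t-relations $r$ with $|r|=n$.
   Context: Fix attribute–taxonomy pairs $A_1{:}T_1,\dots,A_d{:}T_d$ with distinct attribute names, where each taxonomy $T_i=(V_i,\le_{V_i})$ is a poset. A t-tuple over a t-schema $S\subseteq\{A_1{:}T_1,\dots,A_d{:}T_d\}$ maps each $A_i$ in $S$ to a value of $V_i$; $\mathcal{D}$ is the set of all t-tuples over all such t-schemas, and a t-relation is a finite set of t-tuples. A preference relation is a binary relation $\succeq$ on $\mathcal{D}$; its strict part is $t_1\succ t_2$ iff $t_1\succeq t_2$ and not $t_2\succeq t_1$. Preferences are given by a formula $F(x,y)=\bigvee_i P_i(x,y)$, a disjunction of statements; each statement $P_i$ is a disjunction of clauses, each clause a satisfiable conjunction of atoms of the forms $x[A_i]\le_{V_i} v$, $x[A_i]\not\le_{V_i} v$, $y[A_i]\le_{V_i} v$, $y[A_i]\not\le_{V_i} v$; the formula induces $t_1\succeq t_2\iff F(t_1,t_2)$. Operator $\mathsf{T}$ maps a formula to one inducing the transitive closure over $\mathcal{D}$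 of the induced relation. Operator $\mathsf{S}$ (specificity-based refinement): repeat rounds; in a round, for each statement $P_i$ let $\mathrm{Impl}(P_i)$ be the set of statements $P_j$ such that $P_j(t_2,t_1)\Rightarrow P_i(t_1,t_2)$ for all $t_1,t_2\in\mathcal{D}$ but not conversely; simultaneously replace every $P_i$ with nonempty $\mathrm{Impl}(P_i)$ by $P_i(x,y)\wedge\bigwedge_{P_j\in \mathrm{Impl}(P_i)}\neg P_j(y,x)$; stop when no $\mathrm{Impl}$ set is nonempty. After each operator, contradictory clauses and subsumed statements are removed. For $X\in\{\mathsf{T},\mathsf{S}\}^*$, $\succeq_X$ (strict part $\succ_X$) is the relation induced by applying the operators of $X$ in order to the initial formula. The Best operator is $\mathrm{Best}_\succ(r)=\{t_1\in r\mid \nexists t_2\in r,\ t_2\succ t_1\}$. *)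

theory Defs
  imports Main "HOL-Library.Landau_Symbols"
begin

(* t-tuples: attribute index i (attribute A_(i+1), i < d) maps to a value; None = attribute
   not in the t-schema of the tuple.  Values of every taxonomy are drawn from nat. *)
type_synonym tup = "nat \<Rightarrow> nat option"
type_synonym srel = "tup \<Rightarrow> tup \<Rightarrow> bool"

definition taxonomies_ok :: "nat \<Rightarrow> (nat \<Rightarrow> nat set) \<Rightarrow> (nat \<Rightarrow> nat \<Rightarrow> nat \<Rightarrow> bool) \<Rightarrow> bool" where
  "taxonomies_ok d V le \<longleftrightarrow> (\<forall>i<d. finite (V i)
      \<and> (\<forall>a\<in>V i. le i a a)
      \<and> (\<forall>a\<in>V i. \<forall>b\<in>V i. le i a b \<and> le i b a \<longrightarrow> a = b)
      \<and> (\<forall>a\<in>V i. \<forall>b\<in>V i. \<forall>c\<in>V i. le i a b \<and> le i b c \<longrightarrow> le i a c))"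

definition tuples :: "nat \<Rightarrow> (nat \<Rightarrow> nat set) \<Rightarrow> tup set" where
  "tuples d V = {t. dom t \<subseteq> {..<d} \<and> (\<forall>i a. t i = Some a \<longrightarrow> a \<in> V i)}"

datatype var = VX | VY
datatype atom = Le var nat nat | NLe var nat nat
type_synonym clause = "atom list"        (* conjunction *)
type_synonym statement = "clause list"   (* disjunction *)
type_synonym formula = "statement list"  (* disjunction *)

fun pick :: "var \<Rightarrow> tup \<Rightarrow> tup \<Rightarrow> tup" where
  "pick VX x y = x" | "pick VY x y = y"

(* an atom on an attribute absent from the tuple is false *)
fun atom_sem :: "(nat \<Rightarrow> nat \<Rightarrow> nat \<Rightarrow> bool) \<Rightarrow> atom \<Rightarrow> srel" where
  "atom_sem le (Le w i v) x y = (case pick w x y i of Some a \<Rightarrow> le i a v | None \<Rightarrow> False)"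
| "atom_sem le (NLe w i v) x y = (case pick w x y i of Some a \<Rightarrow> \<not> le i a v | None \<Rightarrow> False)"

definition clause_sem :: "(nat \<Rightarrow> nat \<Rightarrow> nat \<Rightarrow> bool) \<Rightarrow> clause \<Rightarrow> srel" where
  "clause_sem le c x y \<longleftrightarrow> (\<forall>a\<in>set c. atom_sem le a x y)"

definition stmt_sem :: "nat \<Rightarrow> (nat \<Rightarrow> nat set) \<Rightarrow> (nat \<Rightarrow> nat \<Rightarrow> nat \<Rightarrow> bool) \<Rightarrow> statement \<Rightarrow> srel" where
  "stmt_sem d V le P x y \<longleftrightarrow> x \<in> tuples d V \<and> y \<in> tuples d V \<and> (\<exists>c\<in>set P. clause_sem le c x y)"

fun atom_ok :: "nat \<Rightarrow> (nat \<Rightarrow> nat set) \<Rightarrow> atom \<Rightarrow> bool" where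
  "atom_ok d V (Le w i v) \<longleftrightarrow> i < d \<and> v \<in> V i"
| "atom_ok d V (NLe w i v) \<longleftrightarrow> i < d \<and> v \<in> V i"

definition formula_ok :: "nat \<Rightarrow> (nat \<Rightarrow> nat set) \<Rightarrow> (nat \<Rightarrow> nat \<Rightarrow> nat \<Rightarrow> bool) \<Rightarrow> formula \<Rightarrow> bool" where
  "formula_ok d V le F \<longleftrightarrow> (\<forall>P\<in>set F. P \<noteq> [] \<and> (\<forall>c\<in>set P.
      (\<forall>a\<in>set c. atom_ok d V a) \<and>
      (\<exists>x\<in>tuples d V. \<exists>y\<in>tuples d V. clause_sem le c x y)))"

definition init_sem :: "nat \<Rightarrow> (nat \<Rightarrow> nat set) \<Rightarrow> (nat \<Rightarrow> nat \<Rightarrow> nat \<Rightarrow> bool) \<Rightarrow> formula \<Rightarrow> srel set" where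
  "init_sem d V le F = stmt_sem d V le ` set F"

definition induced :: "srel set \<Rightarrow> srel" where
  "induced F x y \<longleftrightarrow> (\<exists>P\<in>F. P x y)"

definition strict :: "srel set \<Rightarrow> srel" where
  "strict F x y \<longleftrightarrow> induced F x y \<and> \<not> induced F y x"

definition cleanup :: "srel set \<Rightarrow> srel set" where
  "cleanup F = {P \<in> F. (\<exists>x y. P x y) \<and> \<not> (\<exists>Q\<in>F. P < Q)}"

definition compose :: "tup set \<Rightarrow> srel \<Rightarrow> srel \<Rightarrow> srel" where
  "compose D P Q x y \<longleftrightarrow> (\<exists>z\<in>D. P x z \<and> Q z y)"

inductive_set comps :: "tup set \<Rightarrow> srel set \<Rightarrow> srel set" for D F where
  base: "P \<in> F \<Longrightarrow> P \<in> comps D F"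
| step: "P \<in> F \<Longrightarrow> Q \<in> comps D F \<Longrightarrow> compose D P Q \<in> comps D F"

definition opT :: "tup set \<Rightarrow> srel set \<Rightarrow> srel set" where
  "opT D F = cleanup (comps D F)"

definition Impl :: "srel set \<Rightarrow> srel \<Rightarrow> srel set" where
  "Impl F P = {Q \<in> F. (\<forall>x y. Q y x \<longrightarrow> P x y) \<and> \<not> (\<forall>x y. P x y \<longrightarrow> Q y x)}"

definition round :: "srel set \<Rightarrow> srel set" where
  "round F = (\<lambda>P. if Impl F P = {} then P
                   else (\<lambda>x y. P x y \<and> (\<forall>Q\<in>Impl F P. \<not> Q y x))) ` F"

definition stable :: "srel set \<Rightarrow> bool" where
  "stable F \<longleftrightarrow> (\<forall>P\<in>F. Impl F P = {})"

definition opS :: "srel set \<Rightarrow> srel set" where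
  "opS F = cleanup ((round ^^ (LEAST k. stable ((round ^^ k) F))) F)"

datatype op = T | S

definition apply_op :: "tup set \<Rightarrow> srel set \<Rightarrow> op \<Rightarrow> srel set" where
  "apply_op D F o' = (case o' of T \<Rightarrow> opT D F | S \<Rightarrow> opS F)"

definition apply_ops :: "tup set \<Rightarrow> op list \<Rightarrow> srel set \<Rightarrow> srel set" where
  "apply_ops D X F = foldl (apply_op D) F X"

definition Best :: "srel \<Rightarrow> tup set \<Rightarrow> tup set" where
  "Best R r = {t1 \<in> r. \<not> (\<exists>t2\<in>r. R t2 t1)}"

(* DiffBest(X,Y,n): maximum (Sup of a bounded set of nats; the set is infinite) over all attribute/taxonomy systems, all initial formulas and
   all t-relations r with |r| = n *)
definition DiffBest :: "op list \<Rightarrow> op list \<Rightarrow> nat \<Rightarrow> nat" where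
  "DiffBest X Y n = Sup {card (Best (strict (apply_ops (tuples d V) X (init_sem d V le F))) r
                              - Best (strict (apply_ops (tuples d V) Y (init_sem d V le F))) r)
       | d V le F r. taxonomies_ok d V le \<and> formula_ok d V le F \<and>
                     finite r \<and> r \<subseteq> tuples d V \<and> card r = n}"

end

theory Submission
  imports Defs
begin

text \<open>
  Both separations use a single attribute with the discrete taxonomy on \<open>{0..n}\<close>. The
  statements of the witness formulas only ask which of the classes \<open>{0}\<close>, \<open>{1}\<close>, \<open>{2..n}\<close>
  the two tuples belong to, so each is the lifting \<open>block_rel\<close> of a relation between three
  classes, and \<open>T\<close>, \<open>S\<close>, cleanup and the strict part can be computed on these finite relations.

  For \<open>TST\<close> versus \<open>STST\<close> take the symmetric statement \<open>P = {0}\<times>{\<noteq>0} \<union> {\<noteq>0}\<times>{0}\<close> and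
  its half \<open>P' = {0}\<times>{\<noteq>0}\<close>. Applying \<open>T\<close> first absorbs \<open>P'\<close> into \<open>P\<close> and everything stays
  symmetric, so no tuple is strictly preferred. Applying \<open>S\<close> first cuts \<open>P\<close> down to \<open>P'\<close>,
  since \<open>P'(y,x)\<close> implies \<open>P(x,y)\<close>; then \<open>0\<close> beats every other value. For the converse pair
  take \<open>{0}\<times>{1}\<close>, the symmetric \<open>{1}\<times>{\<ge>2} \<union> {\<ge>2}\<times>{1}\<close> and its half \<open>{\<ge>2}\<times>{1}\<close>. Now
  \<open>T\<close> first composes \<open>{0}\<times>{1}\<close> with the symmetric statement to \<open>{0}\<times>{\<ge>2}\<close>, which survives,
  whereas \<open>S\<close> first cuts the symmetric statement down to its half, after which nothing
  beats a value \<open>\<ge> 2\<close>.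

  On the relation of the \<open>n\<close> tuples with values \<open>0, 2, \<dots>, n\<close>, the \<open>n - 1\<close> tuples with value
  at least 2 are best for one sequence and dominated for the other, and a difference of
  two subsets of an \<open>n\<close>-element relation never has more than \<open>n\<close> elements.
\<close>

section \<open>Cleanup and the operators T and S\<close>

lemma cleanup_cofinal:
  assumes "G \<subseteq> C" and cofinal: "\<And>R. R \<in> C \<Longrightarrow> \<exists>g\<in>G. R \<le> g"
  shows "cleanup C = cleanup G"
proof (intro set_eqI iffI)
  fix R assume R: "R \<in> cleanup C"
  then obtain g where "g \<in> G" "R \<le> g" using cofinal by (auto simp: cleanup_def)
  with R assms(1) show "R \<in> cleanup G"
    by (auto simp: cleanup_def order.order_iff_strict)
next
  fix g assume g: "g \<in> cleanup G"
  have "\<not> g < Q" if "Q \<in> C" for Q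
    using cofinal[OF that] g by (auto simp: cleanup_def dest: less_le_trans)
  with g assms(1) show "g \<in> cleanup C" by (auto simp: cleanup_def)
qed

lemma comps_bounded:
  assumes "F \<subseteq> G" and closed: "\<And>P Q. P \<in> F \<Longrightarrow> Q \<in> G \<Longrightarrow> \<exists>g\<in>G. compose D P Q \<le> g"
    and "R \<in> comps D F"
  shows "\<exists>g\<in>G. R \<le> g"
  using \<open>R \<in> comps D F\<close>
proof induction
  case (base P)
  then show ?case using \<open>F \<subseteq> G\<close> by auto
next
  case (step P Q)
  then obtain g where "g \<in> G" "Q \<le> g" by blast
  then have "compose D P Q \<le> compose D P g" by (auto simp: compose_def le_fun_def)
  moreover obtain h where "h \<in> G" "compose D P g \<le> h" using closed[OF step.hyps(1) \<open>g \<in> G\<close>] by blast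
  ultimately show ?case by (blast intro: order_trans)
qed

lemma opT_eq_cleanup:
  assumes "F \<subseteq> G" "G \<subseteq> comps D F"
    and "\<And>P Q. P \<in> F \<Longrightarrow> Q \<in> G \<Longrightarrow> \<exists>g\<in>G. compose D P Q \<le> g"
  shows "opT D F = cleanup G"
  unfolding opT_def using assms by (intro cleanup_cofinal comps_bounded)

lemma opS_stable: "stable F \<Longrightarrow> opS F = cleanup F"
  by (simp add: opS_def)

lemma opS_one_round:
  assumes "\<not> stable F" "stable (round F)"
  shows "opS F = cleanup (round F)"
proof -
  have "(LEAST k. stable ((round ^^ k) F)) = 1"
    by (rule Least_equality) (use assms in \<open>auto intro!: Suc_leI gr0I\<close>)
  then show ?thesis by (simp add: opS_def)
qed

section \<open>Statements lifted from relations between classes\<close>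

definition block_rel :: "('c \<Rightarrow> tup \<Rightarrow> bool) \<Rightarrow> ('c \<times> 'c) set \<Rightarrow> srel" where
  "block_rel K R x y \<longleftrightarrow> (\<exists>(a, b)\<in>R. K a x \<and> K b y)"

definition cleanup_rel :: "('c \<times> 'c) set set \<Rightarrow> ('c \<times> 'c) set set" where
  "cleanup_rel H = {R \<in> H. R \<noteq> {} \<and> \<not> (\<exists>Q\<in>H. R \<subset> Q)}"

definition Impl_rel :: "('c \<times> 'c) set set \<Rightarrow> ('c \<times> 'c) set \<Rightarrow> ('c \<times> 'c) set set" where
  "Impl_rel F P = {Q \<in> F. Q\<inverse> \<subseteq> P \<and> \<not> P \<subseteq> Q\<inverse>}"

definition round_rel :: "('c \<times> 'c) set set \<Rightarrow> ('c \<times> 'c) set set" where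
  "round_rel F = (\<lambda>P. P - (\<Union>Q\<in>Impl_rel F P. Q\<inverse>)) ` F"

definition stable_rel :: "('c \<times> 'c) set set \<Rightarrow> bool" where
  "stable_rel F \<longleftrightarrow> (\<forall>P\<in>F. Impl_rel F P = {})"

lemma block_rel_converse: "block_rel K (R\<inverse>) x y \<longleftrightarrow> block_rel K R y x"
  by (auto simp: block_rel_def)

lemma induced_block_rel: "induced (block_rel K ` F) = block_rel K (\<Union>F)"
  by (auto simp: fun_eq_iff induced_def block_rel_def)

locale block_partition =
  fixes D :: "tup set" and K :: "'c \<Rightarrow> tup \<Rightarrow> bool"
  assumes block_subset: "K a t \<Longrightarrow> t \<in> D"
    and block_disjoint: "K a t \<Longrightarrow> K b t \<Longrightarrow> a = b"
    and block_nonempty: "\<exists>t. K a t"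
begin

lemma block_rel_iff:
  assumes "K a x" "K b y"
  shows "block_rel K R x y \<longleftrightarrow> (a, b) \<in> R"
proof
  assume "block_rel K R x y"
  then obtain a' b' where "(a', b') \<in> R" "K a' x" "K b' y" by (auto simp: block_rel_def)
  with assms show "(a, b) \<in> R" using block_disjoint by metis
qed (use assms in \<open>auto simp: block_rel_def\<close>)

lemma block_rel_le_iff: "block_rel K R \<le> block_rel K Q \<longleftrightarrow> R \<subseteq> Q"
proof
  assume le: "block_rel K R \<le> block_rel K Q"
  show "R \<subseteq> Q"
  proof clarify
    fix a b assume "(a, b) \<in> R"
    obtain x y where xy: "K a x" "K b y" using block_nonempty by meson
    with \<open>(a, b) \<in> R\<close> have "block_rel K R x y" by (simp add: block_rel_iff)
    with le have "block_rel K Q x y" by (simp add: le_fun_def)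
    with xy show "(a, b) \<in> Q" by (simp add: block_rel_iff)
  qed
qed (auto simp: le_fun_def block_rel_def)

lemma block_rel_less_iff: "block_rel K R < block_rel K Q \<longleftrightarrow> R \<subset> Q"
  by (simp add: less_le_not_le block_rel_le_iff)

lemma ex_block_rel_iff: "(\<exists>x y. block_rel K R x y) \<longleftrightarrow> R \<noteq> {}"
proof
  assume "R \<noteq> {}"
  then obtain a b where "(a, b) \<in> R" by auto
  moreover obtain x y where "K a x" "K b y" using block_nonempty by meson
  ultimately show "\<exists>x y. block_rel K R x y" by (fastforce simp: block_rel_def)
qed (auto simp: block_rel_def)

lemma compose_block_rel: "compose D (block_rel K R) (block_rel K Q) = block_rel K (R O Q)"
proof (intro ext iffI)
  fix x y assume "compose D (block_rel K R) (block_rel K Q) x y"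
  then obtain z a c c' b where "(a, c) \<in> R" "(c', b) \<in> Q" "K a x" "K c z" "K c' z" "K b y"
    by (auto simp: compose_def block_rel_def)
  moreover have "c = c'" using \<open>K c z\<close> \<open>K c' z\<close> by (rule block_disjoint)
  ultimately show "block_rel K (R O Q) x y" by (auto simp: block_rel_def)
next
  fix x y assume "block_rel K (R O Q) x y"
  then obtain a c b where "(a, c) \<in> R" "(c, b) \<in> Q" "K a x" "K b y" by (auto simp: block_rel_def)
  moreover obtain z where "K c z" using block_nonempty by blast
  ultimately show "compose D (block_rel K R) (block_rel K Q) x y"
    using block_subset by (auto simp: compose_def block_rel_def)
qed

lemma block_rel_diff_converse:
  "block_rel K P x y \<and> (\<forall>Q\<in>Qs. \<not> block_rel K Q y x) \<longleftrightarrow> block_rel K (P - (\<Union>Q\<in>Qs. Q\<inverse>)) x y"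
proof (cases "\<exists>a b. K a x \<and> K b y")
  case True
  then obtain a b where "K a x" "K b y" by blast
  then show ?thesis by (simp add: block_rel_iff)
qed (auto simp: block_rel_def)

lemma strict_block_rel: "strict (block_rel K ` F) = block_rel K (\<Union>F - (\<Union>F)\<inverse>)"
  using block_rel_diff_converse[of _ _ _ "{\<Union>F}"]
  by (simp add: fun_eq_iff strict_def induced_block_rel)

lemma cleanup_block_rel: "cleanup (block_rel K ` H) = block_rel K ` cleanup_rel H"
  unfolding cleanup_def cleanup_rel_def Compr_image_eq bex_simps(7) ex_block_rel_iff
    block_rel_less_iff ..

lemma Impl_block_rel: "Impl (block_rel K ` F) (block_rel K P) = block_rel K ` Impl_rel F P"
proof -
  have "(\<forall>x y. block_rel K Q y x \<longrightarrow> block_rel K P x y) \<longleftrightarrow> Q\<inverse> \<subseteq> P"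
    and "(\<forall>x y. block_rel K P x y \<longrightarrow> block_rel K Q y x) \<longleftrightarrow> P \<subseteq> Q\<inverse>" for Q
    by (simp_all add: block_rel_le_iff[symmetric] le_fun_def block_rel_converse)
  then show ?thesis unfolding Impl_def Impl_rel_def Compr_image_eq by simp
qed

lemma stable_block_rel: "stable (block_rel K ` F) \<longleftrightarrow> stable_rel F"
  by (simp add: stable_def stable_rel_def Impl_block_rel)

lemma round_block_rel: "round (block_rel K ` F) = block_rel K ` round_rel F"
proof -
  have eq: "(if Impl (block_rel K ` F) (block_rel K P) = {} then block_rel K P
         else (\<lambda>x y. block_rel K P x y \<and> (\<forall>Q\<in>Impl (block_rel K ` F) (block_rel K P). \<not> Q y x)))
        = block_rel K (P - (\<Union>Q\<in>Impl_rel F P. Q\<inverse>))" for P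
    by (simp add: fun_eq_iff Impl_block_rel block_rel_diff_converse[symmetric])
  show ?thesis unfolding round_def round_rel_def image_image eq ..
qed

lemma block_rel_in_comps: "R \<in> F \<Longrightarrow> block_rel K R \<in> comps D (block_rel K ` F)"
  by (simp add: comps.base)

lemma block_rel_relcomp_in_comps:
  "P \<in> F \<Longrightarrow> block_rel K Q \<in> comps D (block_rel K ` F)
    \<Longrightarrow> block_rel K (P O Q) \<in> comps D (block_rel K ` F)"
  by (metis comps.step compose_block_rel imageI)

lemma opT_block_rel:
  assumes "F \<subseteq> H" "block_rel K ` H \<subseteq> comps D (block_rel K ` F)"
    and "\<forall>P\<in>F. \<forall>Q\<in>H. \<exists>R\<in>H. P O Q \<subseteq> R"
  shows "opT D (block_rel K ` F) = block_rel K ` cleanup_rel H"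
proof -
  have "opT D (block_rel K ` F) = cleanup (block_rel K ` H)"
    using assms by (intro opT_eq_cleanup) (auto simp: compose_block_rel block_rel_le_iff)
  then show ?thesis by (simp add: cleanup_block_rel)
qed

lemma opT_block_rel_closed:
  "\<forall>P\<in>F. \<forall>Q\<in>F. \<exists>R\<in>F. P O Q \<subseteq> R \<Longrightarrow> opT D (block_rel K ` F) = block_rel K ` cleanup_rel F"
  by (rule opT_block_rel) (auto intro: comps.base)

lemma opS_block_rel_stable: "stable_rel F \<Longrightarrow> opS (block_rel K ` F) = block_rel K ` cleanup_rel F"
  by (simp add: opS_stable stable_block_rel cleanup_block_rel)

lemma opS_block_rel_one_round:
  "\<not> stable_rel F \<Longrightarrow> stable_rel (round_rel F)
    \<Longrightarrow> opS (block_rel K ` F) = block_rel K ` cleanup_rel (round_rel F)"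
  by (simp add: opS_one_round stable_block_rel round_block_rel cleanup_block_rel)

end

section \<open>Bounds on DiffBest\<close>

definition DiffBest_values :: "op list \<Rightarrow> op list \<Rightarrow> nat \<Rightarrow> nat set" where
  "DiffBest_values X Y n = {card (Best (strict (apply_ops (tuples d V) X (init_sem d V le F))) r
                              - Best (strict (apply_ops (tuples d V) Y (init_sem d V le F))) r)
       | d V le F r. taxonomies_ok d V le \<and> formula_ok d V le F \<and>
                     finite r \<and> r \<subseteq> tuples d V \<and> card r = n}"

lemma DiffBest_eq_Sup: "DiffBest X Y n = Sup (DiffBest_values X Y n)"
  unfolding DiffBest_def DiffBest_values_def ..

lemma card_Best_diff_le: "finite r \<Longrightarrow> card (Best R r - Best R' r) \<le> card r"
  by (intro card_mono) (auto simp: Best_def)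

lemma DiffBest_values_le: "k \<in> DiffBest_values X Y n \<Longrightarrow> k \<le> n"
  unfolding DiffBest_values_def using card_Best_diff_le by blast

lemma DiffBest_le: "DiffBest X Y n \<le> n"
  unfolding DiffBest_eq_Sup
  by (cases "DiffBest_values X Y n = {}") (auto intro: cSup_least DiffBest_values_le)

lemma DiffBest_ge:
  assumes "taxonomies_ok d V le" "formula_ok d V le F" "finite r" "r \<subseteq> tuples d V" "card r = n"
  shows "card (Best (strict (apply_ops (tuples d V) X (init_sem d V le F))) r
              - Best (strict (apply_ops (tuples d V) Y (init_sem d V le F))) r) \<le> DiffBest X Y n"
  unfolding DiffBest_eq_Sup
proof (rule cSup_upper)
  show "bdd_above (DiffBest_values X Y n)" by (auto intro: bdd_aboveI DiffBest_values_le)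
  show "card (Best (strict (apply_ops (tuples d V) X (init_sem d V le F))) r
              - Best (strict (apply_ops (tuples d V) Y (init_sem d V le F))) r)
        \<in> DiffBest_values X Y n"
    unfolding DiffBest_values_def using assms by blast
qed

lemma bigtheta_linear:
  fixes f :: "nat \<Rightarrow> nat"
  assumes "\<And>n. 2 \<le> n \<Longrightarrow> n - 1 \<le> f n" and "\<And>n. f n \<le> n"
  shows "(\<lambda>n. real (f n)) \<in> \<Theta>(\<lambda>n. real n)"
proof (rule bigthetaI'[of "1/2" 1])
  have "real n / 2 \<le> real (f n)" if "2 \<le> n" for n
    using assms(1)[OF that] that by linarith
  then show "\<forall>\<^sub>F n in at_top.
      1/2 * norm (real n) \<le> norm (real (f n)) \<and> norm (real (f n)) \<le> 1 * norm (real n)"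
    using assms(2) unfolding eventually_at_top_linorder by (auto intro!: exI[of _ 2])
qed simp_all

section \<open>One attribute with three value classes\<close>

datatype vclass = Val0 | Val1 | ValBig

definition classify :: "nat \<Rightarrow> vclass" where
  "classify v = (if v = 0 then Val0 else if v = 1 then Val1 else ValBig)"

definition vals_upto :: "nat \<Rightarrow> nat \<Rightarrow> nat set" where
  "vals_upto n i = {0..n}"

definition discrete :: "nat \<Rightarrow> nat \<Rightarrow> nat \<Rightarrow> bool" where
  "discrete i a b \<longleftrightarrow> a = b"

definition value_class :: "nat \<Rightarrow> vclass \<Rightarrow> tup \<Rightarrow> bool" where
  "value_class n c t \<longleftrightarrow> t \<in> tuples 1 (vals_upto n) \<and> (\<exists>v. t 0 = Some v \<and> classify v = c)"

definition witness_rel :: "nat \<Rightarrow> tup set" where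
  "witness_rel n = (\<lambda>v. [0 \<mapsto> v]) ` ({0} \<union> {2..n})"

lemma taxonomies_ok_discrete: "taxonomies_ok 1 (vals_upto n) discrete"
  unfolding taxonomies_ok_def vals_upto_def discrete_def by blast

lemma singleton_in_tuples_iff: "[i \<mapsto> v] \<in> tuples d V \<longleftrightarrow> i < d \<and> v \<in> V i"
  by (auto simp: tuples_def)

lemma block_rel_value_class_iff:
  "block_rel (value_class n) R x y \<longleftrightarrow> x \<in> tuples 1 (vals_upto n) \<and> y \<in> tuples 1 (vals_upto n)
     \<and> (\<exists>a b. x 0 = Some a \<and> y 0 = Some b \<and> (classify a, classify b) \<in> R)"
  by (auto simp: block_rel_def value_class_def)

lemma inj_singleton_tuple: "inj (\<lambda>v. [i \<mapsto> v])"
  by (rule injI) (drule fun_cong[of _ _ i], simp)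

lemma card_witness_rel:
  assumes "2 \<le> n"
  shows "card (witness_rel n) = n"
proof -
  have "card (witness_rel n) = card ({0} \<union> {2..n})"
    unfolding witness_rel_def
    by (rule card_image[OF inj_on_subset[OF inj_singleton_tuple subset_UNIV]])
  also have "\<dots> = n" using assms by simp
  finally show ?thesis .
qed

lemma Best_block_rel_witness_rel:
  assumes "v \<in> {2..n}"
  shows "[0 \<mapsto> v] \<in> Best (block_rel (value_class n) R) (witness_rel n)
           \<longleftrightarrow> (Val0, ValBig) \<notin> R \<and> (ValBig, ValBig) \<notin> R"
  using assms by (auto simp: Best_def witness_rel_def block_rel_value_class_iff
      singleton_in_tuples_iff vals_upto_def classify_def)

lemma block_rel_value_class_eqI:
  assumes "\<And>x y a b. x 0 = Some a \<Longrightarrow> y 0 = Some b \<Longrightarrow>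
      Rel x y \<longleftrightarrow> x \<in> tuples 1 (vals_upto n) \<and> y \<in> tuples 1 (vals_upto n)
        \<and> (classify a, classify b) \<in> R"
    and "\<And>x y. x 0 = None \<or> y 0 = None \<Longrightarrow> \<not> Rel x y"
  shows "Rel = block_rel (value_class n) R"
proof (intro ext)
  fix x y
  show "Rel x y = block_rel (value_class n) R x y"
    using assms(1)[of x _ y] assms(2)[of x y]
    by (cases "x 0"; cases "y 0") (simp_all add: block_rel_value_class_iff)
qed

section \<open>The two separating examples\<close>

definition pref1 :: "(vclass \<times> vclass) set" where
  "pref1 = {Val0} \<times> {Val1, ValBig}"

definition sym1 :: "(vclass \<times> vclass) set" where
  "sym1 = pref1 \<union> pref1\<inverse>"

definition pref2 :: "(vclass \<times> vclass) set" where
  "pref2 = {(Val0, Val1)}"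

definition sym2 :: "(vclass \<times> vclass) set" where
  "sym2 = {(Val1, ValBig), (ValBig, Val1)}"

definition half2 :: "(vclass \<times> vclass) set" where
  "half2 = {(ValBig, Val1)}"

locale vclass_blocks = block_partition D K for D :: "tup set" and K :: "vclass \<Rightarrow> tup \<Rightarrow> bool"
begin

lemma apply_ops_TST_example1:
  "apply_ops D [T, S, T] (block_rel K ` {sym1, pref1}) = block_rel K ` {sym1, sym1 O sym1}"
proof -
  have comps: "block_rel K ` {sym1, pref1, sym1 O sym1} \<subseteq> comps D (block_rel K ` {sym1, pref1})"
    by (auto simp del: image_insert intro: block_rel_in_comps block_rel_relcomp_in_comps)
  have closed1: "\<forall>P\<in>{sym1, pref1}. \<forall>Q\<in>{sym1, pref1, sym1 O sym1}.
      \<exists>R\<in>{sym1, pref1, sym1 O sym1}. P O Q \<subseteq> R"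
    and closed2: "\<forall>P\<in>{sym1, sym1 O sym1}. \<forall>Q\<in>{sym1, sym1 O sym1}.
      \<exists>R\<in>{sym1, sym1 O sym1}. P O Q \<subseteq> R"
    and max1: "cleanup_rel {sym1, pref1, sym1 O sym1} = {sym1, sym1 O sym1}"
    and max2: "cleanup_rel {sym1, sym1 O sym1} = {sym1, sym1 O sym1}"
    and stable: "stable_rel {sym1, sym1 O sym1}"
    by code_simp+
  have "apply_ops D [T, S, T] (block_rel K ` {sym1, pref1})
      = opT D (opS (opT D (block_rel K ` {sym1, pref1})))"
    by (simp add: apply_ops_def apply_op_def)
  also have "opT D (block_rel K ` {sym1, pref1}) = block_rel K ` {sym1, sym1 O sym1}"
    using opT_block_rel[OF _ comps closed1] max1 by auto
  also have "opS (block_rel K ` {sym1, sym1 O sym1}) = block_rel K ` {sym1, sym1 O sym1}"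
    using opS_block_rel_stable[OF stable] max2 by simp
  also have "opT D (block_rel K ` {sym1, sym1 O sym1}) = block_rel K ` {sym1, sym1 O sym1}"
    using opT_block_rel_closed[OF closed2] max2 by simp
  finally show ?thesis .
qed

lemma apply_ops_STST_example1:
  "apply_ops D [S, T, S, T] (block_rel K ` {sym1, pref1}) = block_rel K ` {pref1}"
proof -
  have unstable: "\<not> stable_rel {sym1, pref1}" and round: "round_rel {sym1, pref1} = {pref1}"
    and stable: "stable_rel {pref1}" and max: "cleanup_rel {pref1} = {pref1}"
    and closed: "\<forall>P\<in>{pref1}. \<forall>Q\<in>{pref1}. \<exists>R\<in>{pref1}. P O Q \<subseteq> R"
    by code_simp+
  have fixed: "opS (block_rel K ` {pref1}) = block_rel K ` {pref1}"
    "opT D (block_rel K ` {pref1}) = block_rel K ` {pref1}"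
    using opS_block_rel_stable[OF stable] opT_block_rel_closed[OF closed] max by simp_all
  have "apply_ops D [S, T, S, T] (block_rel K ` {sym1, pref1})
      = opT D (opS (opT D (opS (block_rel K ` {sym1, pref1}))))"
    by (simp add: apply_ops_def apply_op_def)
  also have "opS (block_rel K ` {sym1, pref1}) = block_rel K ` {pref1}"
    using opS_block_rel_one_round[OF unstable] round stable max by simp
  finally show ?thesis by (simp only: fixed)
qed

lemma apply_ops_TST_example2:
  "apply_ops D [T, S, T] (block_rel K ` {pref2, sym2, half2})
     = block_rel K ` {pref2, sym2, pref2 O sym2, sym2 O sym2}"
proof -
  let ?G = "{pref2, sym2, pref2 O sym2, sym2 O sym2}"
  have comps: "block_rel K ` {pref2, sym2, half2, pref2 O sym2, sym2 O sym2}
      \<subseteq> comps D (block_rel K ` {pref2, sym2, half2})"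
    by (auto simp del: image_insert intro: block_rel_in_comps block_rel_relcomp_in_comps)
  have closed1: "\<forall>P\<in>{pref2, sym2, half2}. \<forall>Q\<in>{pref2, sym2, half2, pref2 O sym2, sym2 O sym2}.
      \<exists>R\<in>{pref2, sym2, half2, pref2 O sym2, sym2 O sym2}. P O Q \<subseteq> R"
    and closed2: "\<forall>P\<in>?G. \<forall>Q\<in>?G. \<exists>R\<in>?G. P O Q \<subseteq> R"
    and max1: "cleanup_rel {pref2, sym2, half2, pref2 O sym2, sym2 O sym2} = ?G"
    and max2: "cleanup_rel ?G = ?G"
    and stable: "stable_rel ?G"
    by code_simp+
  have "apply_ops D [T, S, T] (block_rel K ` {pref2, sym2, half2})
      = opT D (opS (opT D (block_rel K ` {pref2, sym2, half2})))"
    by (simp add: apply_ops_def apply_op_def)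
  also have "opT D (block_rel K ` {pref2, sym2, half2}) = block_rel K ` ?G"
    using opT_block_rel[OF _ comps closed1] max1 by auto
  also have "opS (block_rel K ` ?G) = block_rel K ` ?G"
    using opS_block_rel_stable[OF stable] max2 by simp
  also have "opT D (block_rel K ` ?G) = block_rel K ` ?G"
    using opT_block_rel_closed[OF closed2] max2 by simp
  finally show ?thesis .
qed

lemma apply_ops_STST_example2:
  "apply_ops D [S, T, S, T] (block_rel K ` {pref2, sym2, half2}) = block_rel K ` {pref2, half2}"
proof -
  have unstable: "\<not> stable_rel {pref2, sym2, half2}"
    and round: "round_rel {pref2, sym2, half2} = {pref2, half2}"
    and stable: "stable_rel {pref2, half2}" and max: "cleanup_rel {pref2, half2} = {pref2, half2}"
    and closed: "\<forall>P\<in>{pref2, half2}. \<forall>Q\<in>{pref2, half2}. \<exists>R\<in>{pref2, half2}. P O Q \<subseteq> R"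
    by code_simp+
  have fixed: "opS (block_rel K ` {pref2, half2}) = block_rel K ` {pref2, half2}"
    "opT D (block_rel K ` {pref2, half2}) = block_rel K ` {pref2, half2}"
    using opS_block_rel_stable[OF stable] opT_block_rel_closed[OF closed] max by simp_all
  have "apply_ops D [S, T, S, T] (block_rel K ` {pref2, sym2, half2})
      = opT D (opS (opT D (opS (block_rel K ` {pref2, sym2, half2}))))"
    by (simp add: apply_ops_def apply_op_def)
  also have "opS (block_rel K ` {pref2, sym2, half2}) = block_rel K ` {pref2, half2}"
    using opS_block_rel_one_round[OF unstable] round stable max by simp
  finally show ?thesis by (simp only: fixed)
qed

end

definition formula1 :: formula where
  "formula1 = [[[Le VX 0 0, NLe VY 0 0], [NLe VX 0 0, Le VY 0 0]], [[Le VX 0 0, NLe VY 0 0]]]"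

definition formula2 :: formula where
  "formula2 = [[[Le VX 0 0, Le VY 0 1]],
               [[Le VX 0 1, NLe VY 0 0, NLe VY 0 1], [NLe VX 0 0, NLe VX 0 1, Le VY 0 1]],
               [[NLe VX 0 0, NLe VX 0 1, Le VY 0 1]]]"

lemma init_sem_formula1:
  "init_sem 1 (vals_upto n) discrete formula1 = block_rel (value_class n) ` {sym1, pref1}"
proof -
  have "stmt_sem 1 (vals_upto n) discrete [[Le VX 0 0, NLe VY 0 0], [NLe VX 0 0, Le VY 0 0]]
        = block_rel (value_class n) sym1"
   and "stmt_sem 1 (vals_upto n) discrete [[Le VX 0 0, NLe VY 0 0]]
        = block_rel (value_class n) pref1"
    by (rule block_rel_value_class_eqI;
        auto simp: stmt_sem_def clause_sem_def discrete_def classify_def sym1_def pref1_def)+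
  then show ?thesis by (simp add: init_sem_def formula1_def)
qed

lemma init_sem_formula2:
  "init_sem 1 (vals_upto n) discrete formula2 = block_rel (value_class n) ` {pref2, sym2, half2}"
proof -
  have "stmt_sem 1 (vals_upto n) discrete [[Le VX 0 0, Le VY 0 1]]
        = block_rel (value_class n) pref2"
   and "stmt_sem 1 (vals_upto n) discrete
          [[Le VX 0 1, NLe VY 0 0, NLe VY 0 1], [NLe VX 0 0, NLe VX 0 1, Le VY 0 1]]
        = block_rel (value_class n) sym2"
   and "stmt_sem 1 (vals_upto n) discrete [[NLe VX 0 0, NLe VX 0 1, Le VY 0 1]]
        = block_rel (value_class n) half2"
    by (rule block_rel_value_class_eqI;
        auto simp: stmt_sem_def clause_sem_def discrete_def classify_def
          pref2_def sym2_def half2_def)+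
  then show ?thesis by (simp add: init_sem_def formula2_def)
qed

lemma formula_ok_formula1:
  assumes "1 \<le> n"
  shows "formula_ok 1 (vals_upto n) discrete formula1"
proof -
  have "[0 \<mapsto> 0] \<in> tuples 1 (vals_upto n)" "[0 \<mapsto> 1] \<in> tuples 1 (vals_upto n)"
    using assms by (simp_all add: singleton_in_tuples_iff vals_upto_def)
  moreover have "clause_sem discrete [Le VX 0 0, NLe VY 0 0] [0 \<mapsto> 0] [0 \<mapsto> 1]"
    and "clause_sem discrete [NLe VX 0 0, Le VY 0 0] [0 \<mapsto> 1] [0 \<mapsto> 0]"
    by (simp_all add: clause_sem_def discrete_def)
  ultimately show ?thesis
    unfolding formula_ok_def formula1_def using assms by (auto simp: vals_upto_def)
qed

lemma formula_ok_formula2: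
  assumes "2 \<le> n"
  shows "formula_ok 1 (vals_upto n) discrete formula2"
proof -
  have "[0 \<mapsto> 0] \<in> tuples 1 (vals_upto n)" "[0 \<mapsto> 1] \<in> tuples 1 (vals_upto n)"
    "[0 \<mapsto> 2] \<in> tuples 1 (vals_upto n)"
    using assms by (simp_all add: singleton_in_tuples_iff vals_upto_def)
  moreover have "clause_sem discrete [Le VX 0 0, Le VY 0 1] [0 \<mapsto> 0] [0 \<mapsto> 1]"
    and "clause_sem discrete [Le VX 0 1, NLe VY 0 0, NLe VY 0 1] [0 \<mapsto> 1] [0 \<mapsto> 2]"
    and "clause_sem discrete [NLe VX 0 0, NLe VX 0 1, Le VY 0 1] [0 \<mapsto> 2] [0 \<mapsto> 1]"
    by (simp_all add: clause_sem_def discrete_def)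
  ultimately show ?thesis
    unfolding formula_ok_def formula2_def using assms by (auto simp: vals_upto_def)
qed

lemma DiffBest_ge_separation:
  fixes n :: nat and F :: formula and X Y :: "op list"
  defines "best Z \<equiv> Best (strict (apply_ops (tuples 1 (vals_upto n)) Z
                     (init_sem 1 (vals_upto n) discrete F))) (witness_rel n)"
  assumes "2 \<le> n" and F: "formula_ok 1 (vals_upto n) discrete F"
    and separated: "\<And>v. v \<in> {2..n} \<Longrightarrow> [0 \<mapsto> v] \<in> best X - best Y"
  shows "n - 1 \<le> DiffBest X Y n"
proof -
  have "n - 1 = card ((\<lambda>v. [0 \<mapsto> v] :: tup) ` {2..n})"
    by (simp add: card_image inj_on_subset[OF inj_singleton_tuple])
  also have "\<dots> \<le> card (best X - best Y)"
  proof (rule card_mono)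
    show "finite (best X - best Y)"
      by (rule finite_subset[of _ "witness_rel n"]) (auto simp: best_def Best_def witness_rel_def)
  qed (use separated in blast)
  also have "\<dots> \<le> DiffBest X Y n"
  proof -
    have "finite (witness_rel n)" "witness_rel n \<subseteq> tuples 1 (vals_upto n)"
      by (auto simp: witness_rel_def singleton_in_tuples_iff vals_upto_def)
    then show ?thesis
      unfolding best_def
      by (intro DiffBest_ge[OF taxonomies_ok_discrete F]) (simp_all add: card_witness_rel assms)
  qed
  finally show ?thesis .
qed

locale value_classes =
  fixes n :: nat
  assumes two_le_n: "2 \<le> n"

sublocale value_classes \<subseteq> vclass_blocks "tuples 1 (vals_upto n)" "value_class n"
proof
  fix c
  define v :: nat where "v = (case c of Val0 \<Rightarrow> 0 | Val1 \<Rightarrow> 1 | ValBig \<Rightarrow> 2)"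
  have "v \<le> n" "classify v = c"
    using two_le_n by (cases c; simp add: v_def classify_def)+
  then show "\<exists>t. value_class n c t"
    by (intro exI[of _ "[0 \<mapsto> v]"]) (simp add: value_class_def singleton_in_tuples_iff vals_upto_def)
qed (auto simp: value_class_def)

context value_classes
begin

lemma DiffBest_TST_STST_ge: "n - 1 \<le> DiffBest [T, S, T] [S, T, S, T] n"
proof -
  have "(Val0, ValBig) \<notin> \<Union>{sym1, sym1 O sym1} - (\<Union>{sym1, sym1 O sym1})\<inverse>"
    "(ValBig, ValBig) \<notin> \<Union>{sym1, sym1 O sym1} - (\<Union>{sym1, sym1 O sym1})\<inverse>"
    "(Val0, ValBig) \<in> \<Union>{pref1} - (\<Union>{pref1})\<inverse>"
    by code_simp+
  then show ?thesis
    using two_le_n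
    by (intro DiffBest_ge_separation[where X = "[T, S, T]" and Y = "[S, T, S, T]",
          OF two_le_n formula_ok_formula1, unfolded init_sem_formula1 apply_ops_TST_example1
          apply_ops_STST_example1 strict_block_rel])
      (simp_all add: Best_block_rel_witness_rel)
qed

lemma DiffBest_STST_TST_ge: "n - 1 \<le> DiffBest [S, T, S, T] [T, S, T] n"
proof -
  let ?tst = "{pref2, sym2, pref2 O sym2, sym2 O sym2}"
  have "(Val0, ValBig) \<notin> \<Union>{pref2, half2} - (\<Union>{pref2, half2})\<inverse>"
    "(ValBig, ValBig) \<notin> \<Union>{pref2, half2} - (\<Union>{pref2, half2})\<inverse>"
    "(Val0, ValBig) \<in> \<Union>?tst - (\<Union>?tst)\<inverse>"
    by code_simp+
  then show ?thesis
    by (intro DiffBest_ge_separation[where X = "[S, T, S, T]" and Y = "[T, S, T]",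
          OF two_le_n formula_ok_formula2[OF two_le_n], unfolded init_sem_formula2
          apply_ops_TST_example2 apply_ops_STST_example2 strict_block_rel])
      (simp add: Best_block_rel_witness_rel)
qed

end

theorem mainTheorem12:
  shows "(\<lambda>n. real (DiffBest [T, S, T] [S, T, S, T] n)) \<in> \<Theta>(\<lambda>n. real n)
       \<and> (\<lambda>n. real (DiffBest [S, T, S, T] [T, S, T] n)) \<in> \<Theta>(\<lambda>n. real n)"
proof -
  have "n - 1 \<le> DiffBest [T, S, T] [S, T, S, T] n" "n - 1 \<le> DiffBest [S, T, S, T] [T, S, T] n"
    if "2 \<le> n" for n
  proof -
    interpret value_classes n using that by unfold_locales
    show "n - 1 \<le> DiffBest [T, S, T] [S, T, S, T] n" "n - 1 \<le> DiffBest [S, T, S, T] [T, S, T] n"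
      by (fact DiffBest_TST_STST_ge DiffBest_STST_TST_ge)+
  qed
  then show ?thesis by (auto intro!: bigtheta_linear DiffBest_le)
qed

end
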